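(* Let $f=h+\overline{g}$ be a sense-preserving harmonic mapping in $\mathbb{D}$, normalized by $h(0)=g(0)=0$, $h'(0)=1$, $g'(0)=0$, with dilatation $\omega=g'/h'$, and let $\varphi=h-g$. If $\varphi$ is a convex mapping (univalent with convex image) and $\alpha$ is a real number with $-x_0<\alpha<\frac{\sqrt{2}}{2}$, where $x_0\approx 0.303$ is the positive solution of $x\pi+2\arcsin(x)=\frac{\pi}{2}$, then $F_\alpha\in SHCC$.
   Context: Define $\varphi_\alpha(z)=\int_0^z\left(\frac{\varphi(\zeta)}{\zeta}\right)^\alpha d\zeta$ (branch equal to $1$ at $0$), and $F_\alpha=H+\overline{G}$ where $H,G$ are analytic in $\mathbb{D}$, $H(0)=G(0)=0$, $H-G=\varphi_\alpha$, $G'/H'=\alpha\omega$. A harmonic mapping $F=H+\overline{G}$ belongs to $SHCC$ (stable harmonic close-to-convex) if $H+\lambda G$ is a close-to-convex analytic function in $\mathbb{D}$ for every $\lambda$ with $|\lambda|=1$. *)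

theory Defs
  imports "HOL-Complex_Analysis.Complex_Analysis"
begin

abbreviation unit_disc :: "complex set" where "unit_disc \<equiv> ball 0 1"

definition convex_mapping :: "(complex \<Rightarrow> complex) \<Rightarrow> bool" where
  "convex_mapping p \<longleftrightarrow> p holomorphic_on unit_disc \<and> inj_on p unit_disc \<and> convex (p ` unit_disc)"

definition close_to_convex :: "(complex \<Rightarrow> complex) \<Rightarrow> bool" where
  "close_to_convex f \<longleftrightarrow> f holomorphic_on unit_disc \<and>
     (\<exists>psi. convex_mapping psi \<and> (\<forall>z\<in>unit_disc. Re (deriv f z / deriv psi z) > 0))"

text \<open>Stable harmonic close-to-convex: F = H + conj G with H + lambda G close-to-convex
  for every unimodular lambda.\<close>
definition SHCC :: "(complex \<Rightarrow> complex) \<Rightarrow> (complex \<Rightarrow> complex) \<Rightarrow> bool" where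
  "SHCC H G \<longleftrightarrow> (\<forall>lam. norm lam = 1 \<longrightarrow> close_to_convex (\<lambda>z. H z + lam * G z))"

definition log_quot_branch :: "(complex \<Rightarrow> complex) \<Rightarrow> (complex \<Rightarrow> complex) \<Rightarrow> bool" where
  "log_quot_branch p L \<longleftrightarrow> L holomorphic_on unit_disc \<and> L 0 = 0 \<and>
     (\<forall>z\<in>unit_disc - {0}. exp (L z) = p z / z)"

text \<open>phi_alpha(z) = integral from 0 to z of (phi(zeta)/zeta)^alpha, branch equal to 1 at 0.\<close>
definition phi_alpha :: "(complex \<Rightarrow> complex) \<Rightarrow> real \<Rightarrow> complex \<Rightarrow> complex" where
  "phi_alpha p a z = contour_integral (linepath 0 z)
      (\<lambda>\<zeta>. exp (of_real a * (SOME L. log_quot_branch p L) \<zeta>))"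

definition x0 :: real where
  "x0 = (THE x. 0 < x \<and> x \<le> 1 \<and> x * pi + 2 * arcsin x = pi / 2)"

end

theory Submission
  imports Defs
begin

(* Write phi = h - g and L = log (phi z / z), so that phi_alpha' = exp (alpha L). From H - G = phi_alpha
   and G' = alpha omega H' one gets (H + c G)' = phi_alpha' (1 + c alpha omega) / (1 - alpha omega), where
   |alpha omega| <= |alpha| < 1. Since phi is convex, Re (z phi' / phi) > 1/2 and Re (phi / z) > 1/2
   (Marx-Strohhaecker, via Jack's lemma).
   For alpha > 0 the first bound gives Re (1 + z phi_alpha'' / phi_alpha') > 1 - alpha / 2 > 0, so phi_alpha
   is itself convex, and (H + c G)' / phi_alpha' has argument below 2 arcsin alpha < pi / 2.
   For alpha <= 0 compare with the identity: by the second bound, the argument of (H + c G)' is below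
   |alpha| pi / 2 + 2 arcsin |alpha|, which is less than pi / 2 exactly when |alpha| < x0.
   The analytic convexity criterion is proved along the way: for Re (1 + z psi'' / psi') > 0 the
   tangent to psi (|z| = r) turns monotonically once around, so psi (|z| < r) is the intersection of
   the half-planes behind these tangents, and the argument principle shows that psi takes each
   of its values there once. *)

lemma rcis_add_2pi_multiple: "rcis r (\<theta> + 2 * pi * of_int k) = rcis r \<theta>"
  by (simp add: rcis_def flip: cis_mult)

lemma rcis_in_period:
  obtains \<theta>\<^sub>1 where "a \<le> \<theta>\<^sub>1" "\<theta>\<^sub>1 \<le> a + 2 * pi" "rcis r \<theta> = rcis r \<theta>\<^sub>1"
proof -
  define k where "k = \<lfloor>(\<theta> - a) / (2 * pi)\<rfloor>"
  have "of_int k \<le> (\<theta> - a) / (2 * pi)" "(\<theta> - a) / (2 * pi) < of_int k + 1"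
    unfolding k_def by linarith+
  then have "a \<le> \<theta> - 2 * pi * of_int k" "\<theta> - 2 * pi * of_int k \<le> a + 2 * pi"
    by (auto simp: field_simps)
  moreover have "rcis r \<theta> = rcis r (\<theta> - 2 * pi * of_int k)"
    using rcis_add_2pi_multiple[of r "\<theta> - 2 * pi * of_int k" k] by simp
  ultimately show thesis
    using that by blast
qed

lemma rcis_conv_exp: "rcis r \<theta> = of_real r * exp (\<i> * of_real \<theta>)"
  by (simp add: rcis_def cis_conv_exp)

lemma continuous_on_comp_circle:
  assumes "continuous_on (ball 0 1) f" "\<bar>r\<bar> < 1"
  shows "continuous_on UNIV (\<lambda>t. f (rcis r (2 * pi * t)))"
  by (rule continuous_on_compose2[OF assms(1)]) (use assms(2) in \<open>auto intro!: continuous_intros\<close>)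

lemma has_real_derivative_Re_Im_rcis:
  assumes "(f has_field_derivative D) (at (rcis r \<theta>))"
  shows "((\<lambda>t. Re (f (rcis r t))) has_real_derivative Re (\<i> * rcis r \<theta> * D)) (at \<theta>)"
    and "((\<lambda>t. Im (f (rcis r t))) has_real_derivative Im (\<i> * rcis r \<theta> * D)) (at \<theta>)"
proof -
  have "(rcis r has_vector_derivative \<i> * rcis r \<theta>) (at \<theta>)"
    unfolding rcis_def[abs_def] has_vector_derivative_def
    by (auto intro!: derivative_eq_intros simp: algebra_simps)
  from field_vector_diff_chain_at[OF this assms]
  have "((\<lambda>t. f (rcis r t)) has_derivative (\<lambda>h. h *\<^sub>R (\<i> * rcis r \<theta> * D))) (at \<theta>)"
    by (simp add: has_vector_derivative_def o_def)
  from has_derivative_Re[OF this] has_derivative_Im[OF this]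
  show "((\<lambda>t. Re (f (rcis r t))) has_real_derivative Re (\<i> * rcis r \<theta> * D)) (at \<theta>)"
    and "((\<lambda>t. Im (f (rcis r t))) has_real_derivative Im (\<i> * rcis r \<theta> * D)) (at \<theta>)"
    by (simp_all add: has_field_derivative_def mult_commute_abs)
qed

lemma Re_i_cnj_rcis_mult_rcis: "Re (\<i> * cnj (rcis a x) * rcis b y) = - (a * b) * sin (y - x)"
proof -
  have "cnj (rcis a x) * rcis b y = rcis (a * b) (y - x)"
    by (simp add: rcis_def cis_cnj cis_mult algebra_simps)
  then show ?thesis
    by (simp add: mult.assoc)
qed

section \<open>Counting zeros by winding numbers\<close>

lemma winding_number_exp_lift:
  assumes "continuous_on UNIV p" "p 1 = p 0 + 2 * pi * \<i>"
  shows "winding_number (exp \<circ> p) 0 = 1"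
proof -
  have "path p"
    unfolding path_def by (rule continuous_on_subset[OF assms(1)]) simp
  then have "winding_number (exp \<circ> p) 0 = (pathfinish p - pathstart p) / (2 * of_real pi * \<i>)"
    by (rule winding_number_compose_exp)
  then show ?thesis
    using assms(2) by (simp add: pathfinish_def pathstart_def)
qed

lemma winding_number_comp_circlepath:
  assumes f: "f holomorphic_on ball 0 1" and r: "0 < r" "r < 1"
    and no_zero: "\<And>w. w \<in> sphere 0 r \<Longrightarrow> f w \<noteq> 0"
  shows "2 * pi * \<i> * winding_number (f \<circ> circlepath 0 r) 0
      = contour_integral (circlepath 0 r) (\<lambda>x. deriv f x * 1 / f x)"
proof -
  have img: "path_image (circlepath 0 r) \<subseteq> ball 0 1"
    using r by auto
  have "valid_path (f \<circ> circlepath 0 r)"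
    by (rule valid_path_compose_holomorphic[OF _ f open_ball img]) simp
  moreover have "0 \<notin> path_image (f \<circ> circlepath 0 r)"
    using no_zero r by (auto simp: path_image_compose)
  ultimately have "2 * pi * \<i> * winding_number (f \<circ> circlepath 0 r) 0
      = contour_integral (f \<circ> circlepath 0 r) (\<lambda>w. 1 / (w - 0))"
    by (simp add: winding_number_valid_path)
  also have "\<dots> = contour_integral (circlepath 0 r) (\<lambda>x. deriv f x * 1 / f x)"
    using contour_integral_comp_analyticW[of f "ball 0 1" "circlepath 0 r" "\<lambda>w. 1 / (w - 0)"] f img
    by (simp add: analytic_on_open)
  finally show ?thesis .
qed

lemma zorder_ge_1_at_zero:
  assumes f: "f holomorphic_on S" and S: "open S" "connected S"
    and p: "p \<in> S" "f p = 0" and b: "b \<in> S" "f b \<noteq> 0"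
  shows "1 \<le> zorder f p"
proof -
  obtain e where e: "0 < e" "ball p e \<subseteq> S" "\<And>z. z \<in> ball p e - {p} \<Longrightarrow> f z \<noteq> 0"
    by (rule isolated_zeros[OF f S p b]) blast
  have "\<forall>z. z \<noteq> p \<and> dist z p < e \<longrightarrow> f z \<noteq> 0"
    using e(3) by (simp add: dist_commute)
  then have "eventually (\<lambda>z. f z \<noteq> 0) (at p)"
    unfolding eventually_at using e(1) by blast
  then have "0 < zorder f p"
    using zorder_pos_iff[OF f S(1) p(1)] p(2) by (simp add: eventually_frequently)
  then show ?thesis
    by simp
qed

lemma sum_winding_number_circlepath:
  assumes fin: "finite Z" and Z: "\<And>p. p \<in> Z \<Longrightarrow> norm p \<noteq> r" and r: "0 < r"
  shows "(\<Sum>p\<in>Z. winding_number (circlepath 0 r) p * g p) = (\<Sum>p\<in>{p \<in> Z. norm p < r}. g p)"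
proof -
  have "winding_number (circlepath 0 r) p * g p = (if norm p < r then g p else 0)" if "p \<in> Z" for p
  proof (cases "norm p < r")
    case False
    then have "p \<notin> cball 0 r"
      using Z[OF that] by auto
    then have "winding_number (circlepath 0 r) p = 0"
      using r by (intro winding_number_zero_outside[of _ "cball 0 r"]) auto
    then show ?thesis
      using False by simp
  qed (simp add: winding_number_circlepath)
  then show ?thesis
    using fin by (simp add: sum.inter_filter)
qed

lemma winding_number_comp_circlepath_eq_sum_zorder:
  assumes f: "f holomorphic_on ball 0 1" "\<not> f constant_on ball 0 1" and r: "0 < r" "r < 1"
    and no_zero: "\<And>w. w \<in> sphere 0 r \<Longrightarrow> f w \<noteq> 0"
  shows "finite {z \<in> ball 0 r. f z = 0}"
    and "winding_number (f \<circ> circlepath 0 r) 0 = (\<Sum>p\<in>{z \<in> ball 0 r. f z = 0}. of_int (zorder f p))"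
proof -
  define S where "S = ball (0::complex) ((1 + r) / 2)"
  define Z where "Z = {w \<in> S. f w = 0}"
  have S: "open S" "connected S" "S \<subseteq> ball 0 1" "cball 0 r \<subseteq> S"
    using r by (auto simp: S_def)
  have img: "path_image (circlepath 0 r) = sphere 0 r"
    using r by simp
  have "finite {z \<in> cball 0 ((1 + r) / 2). f z = 0}"
    using r by (intro holomorphic_compact_finite_zeros[OF f(1) open_ball connected_ball compact_cball _ f(2)]) auto
  then have fin: "finite Z"
    by (rule finite_subset[rotated]) (auto simp: Z_def S_def)
  have outside: "winding_number (circlepath 0 r) p = 0" if "p \<notin> cball 0 r" for p
    using that r by (intro winding_number_zero_outside[of _ "cball 0 r"]) auto
  have "contour_integral (circlepath 0 r) (\<lambda>x. deriv f x * 1 / f x) =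
      2 * pi * \<i> * (\<Sum>p\<in>{w \<in> S. f w = 0 \<or> w \<in> {}}.
        winding_number (circlepath 0 r) p * 1 * of_int (zorder f p))"
  proof (rule argument_principle[OF S(1,2)])
    show "f holomorphic_on S - {}"
      using holomorphic_on_subset[OF f(1) S(3)] by simp
    show "path_image (circlepath 0 r) \<subseteq> S - {w \<in> S. f w = 0 \<or> w \<in> {}}"
      using img no_zero S(4) by auto
    show "\<forall>z. z \<notin> S \<longrightarrow> winding_number (circlepath 0 r) z = 0"
      using outside S(4) by blast
    show "finite {w \<in> S. f w = 0 \<or> w \<in> {}}"
      using fin by (simp add: Z_def)
  qed auto
  also have "{w \<in> S. f w = 0 \<or> w \<in> {}} = Z"
    by (simp add: Z_def)
  also have "(\<Sum>p\<in>Z. winding_number (circlepath 0 r) p * 1 * of_int (zorder f p))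
      = (\<Sum>p\<in>{p \<in> Z. norm p < r}. of_int (zorder f p))"
    using sum_winding_number_circlepath[OF fin _ r(1), of "\<lambda>p. of_int (zorder f p)"] no_zero
    by (force simp: Z_def)
  also have "{p \<in> Z. norm p < r} = {z \<in> ball 0 r. f z = 0}"
    using S(4) by (auto simp: Z_def)
  also have "contour_integral (circlepath 0 r) (\<lambda>x. deriv f x * 1 / f x)
      = 2 * pi * \<i> * winding_number (f \<circ> circlepath 0 r) 0"
    by (rule winding_number_comp_circlepath[OF f(1) r no_zero, symmetric])
  finally show "winding_number (f \<circ> circlepath 0 r) 0 = (\<Sum>p\<in>{z \<in> ball 0 r. f z = 0}. of_int (zorder f p))"
    by simp
  show "finite {z \<in> ball 0 r. f z = 0}"
    by (rule finite_subset[OF _ fin]) (use S(4) in \<open>auto simp: Z_def\<close>)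
qed

lemma unique_zero_if_winding_number_eq_1:
  assumes f: "f holomorphic_on ball 0 1" and r: "0 < r" "r < 1"
    and no_zero: "\<And>w. w \<in> sphere 0 r \<Longrightarrow> f w \<noteq> 0"
    and wn: "winding_number (f \<circ> circlepath 0 r) 0 = 1"
  shows "\<exists>!z. z \<in> ball 0 r \<and> f z = 0"
proof -
  define Z where "Z = {z \<in> ball 0 r. f z = 0}"
  have nonconst: "\<not> f constant_on ball 0 1"
  proof
    assume "f constant_on ball 0 1"
    then obtain c where c: "\<And>w. w \<in> ball 0 1 \<Longrightarrow> f w = c"
      by (auto simp: constant_on_def)
    have "f (rcis r 0) = c"
      using c r by simp
    moreover have "f (rcis r 0) \<noteq> 0"
      using no_zero r by simp
    ultimately have "c \<noteq> 0"
      by simp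
    moreover have "f \<circ> circlepath 0 r = (\<lambda>t. c)"
      using c r by (auto simp: fun_eq_iff circlepath norm_mult)
    ultimately show False
      using wn winding_number_zero_const[of c 0] by simp
  qed
  note count = winding_number_comp_circlepath_eq_sum_zorder[OF f nonconst r no_zero]
  have zorder_pos: "1 \<le> zorder f p" if "p \<in> Z" for p
    using that r no_zero[of "rcis r 0"]
    by (intro zorder_ge_1_at_zero[OF f open_ball connected_ball, of _ "rcis r 0"]) (auto simp: Z_def)
  have "of_int (\<Sum>p\<in>Z. zorder f p) = (1::complex)"
    using count(2) wn by (simp add: Z_def)
  then have sum1: "(\<Sum>p\<in>Z. zorder f p) = 1"
    by (simp only: of_int_eq_1_iff)
  have "int (card Z) * 1 \<le> (\<Sum>p\<in>Z. zorder f p)"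
    by (rule sum_bounded_below) (use zorder_pos in auto)
  then have "card Z \<le> 1"
    using sum1 by simp
  moreover have "Z \<noteq> {}"
    using sum1 by auto
  ultimately have "card Z = 1"
    using count(1) by (simp add: Z_def Suc_leI le_antisym card_gt_0_iff)
  then obtain z\<^sub>0 where "Z = {z\<^sub>0}"
    by (rule card_1_singletonE)
  then show ?thesis
    unfolding Z_def by (metis (mono_tags, lifting) mem_Collect_eq singletonD singletonI)
qed

section \<open>An analytic criterion for convex mappings\<close>

lemma nonpos_of_deriv_minus_sin_angle:
  fixes v A \<rho> :: "real \<Rightarrow> real"
  assumes dv: "\<And>t. (v has_real_derivative - \<rho> t * sin (A t - A a)) (at t)"
    and \<rho>: "\<And>t. 0 < \<rho> t"
    and A_mono: "\<And>x y. x \<le> y \<Longrightarrow> A x \<le> A y" and A_cont: "continuous_on {a..a + 2 * pi} A"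
    and A_turn: "A (a + 2 * pi) = A a + 2 * pi"
    and v_ends: "v a = 0" "v (a + 2 * pi) = 0"
    and t: "a \<le> t" "t \<le> a + 2 * pi"
  shows "v t \<le> 0"
proof -
  obtain s where s: "a \<le> s" "s \<le> a + 2 * pi" "A s = A a + pi"
    using IVT'[of A a "A a + pi" "a + 2 * pi"] A_cont A_turn by auto
  show ?thesis
  proof (cases "t \<le> s")
    case True
    have "v t \<le> v a"
    proof (rule DERIV_nonpos_imp_nonincreasing[OF t(1)])
      fix x assume x: "a \<le> x" "x \<le> t"
      have "0 \<le> sin (A x - A a)"
        using A_mono[of a x] A_mono[of x s] x True s by (intro sin_ge_zero) auto
      then show "\<exists>y. (v has_real_derivative y) (at x) \<and> y \<le> 0"
        using dv[of x] \<rho>[of x] by (intro exI[of _ "- \<rho> x * sin (A x - A a)"]) simp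
    qed
    then show ?thesis using v_ends by simp
  next
    case False
    have "v t \<le> v (a + 2 * pi)"
    proof (rule DERIV_nonneg_imp_nondecreasing[OF t(2)])
      fix x assume x: "t \<le> x" "x \<le> a + 2 * pi"
      have "pi \<le> A x - A a" "A x - A a \<le> 2 * pi"
        using A_mono[of s x] A_mono[of x "a + 2 * pi"] x False s A_turn by auto
      then have "sin (A x - A a) \<le> 0"
        by (cases "A x - A a = 2 * pi") (auto intro: sin_le_zero)
      then show "\<exists>y. (v has_real_derivative y) (at x) \<and> 0 \<le> y"
        using dv[of x] \<rho>[of x]
        by (intro exI[of _ "- \<rho> x * sin (A x - A a)"]) (simp add: mult_nonneg_nonpos)
    qed
    then show ?thesis using v_ends by simp
  qed
qed

lemma Re_neg_in_ball_if_boundary_nonpos: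
  assumes f: "f holomorphic_on ball 0 1" and r: "0 < r" "r < 1"
    and boundary: "\<And>w. w \<in> sphere 0 r \<Longrightarrow> Re (f w) \<le> 0"
    and deriv_nz: "\<And>z. z \<in> ball 0 r \<Longrightarrow> deriv f z \<noteq> 0"
    and z: "z \<in> ball 0 r"
  shows "Re (f z) < 0"
proof -
  have sub: "cball 0 r \<subseteq> ball (0::complex) 1"
    using r by auto
  have F1: "(\<lambda>w. exp (f w)) holomorphic_on ball 0 1"
    by (intro holomorphic_intros f)
  then have F: "(\<lambda>w. exp (f w)) holomorphic_on ball 0 r"
    by (rule holomorphic_on_subset) (use sub in auto)
  have le1: "norm (exp (f w)) \<le> 1" if "w \<in> ball 0 r" for w
  proof (rule maximum_modulus_frontier[of "\<lambda>w. exp (f w)" "ball 0 r"])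
    show "continuous_on (closure (ball 0 r)) (\<lambda>w. exp (f w))"
      using r holomorphic_on_imp_continuous_on[OF holomorphic_on_subset[OF F1 sub]] by simp
  qed (use F that r boundary in auto)
  have "Re (f z) \<noteq> 0"
  proof
    assume "Re (f z) = 0"
    then have "(\<lambda>w. exp (f w)) constant_on ball 0 r"
      using maximum_modulus_principle[OF F _ _ _ _ z] le1 by auto
    then obtain c where c: "\<And>w. w \<in> ball 0 r \<Longrightarrow> exp (f w) = c"
      by (auto simp: constant_on_def)
    have "((\<lambda>w. exp (f w)) has_field_derivative exp (f z) * deriv f z) (at z)"
      using z sub by (auto intro!: derivative_eq_intros holomorphic_derivI[OF f])
    then have "((\<lambda>w. c) has_field_derivative exp (f z) * deriv f z) (at z)"
      by (rule has_field_derivative_transform_within_open[OF _ open_ball z]) (use c in auto)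
    then show False
      using DERIV_unique[OF _ DERIV_const] deriv_nz[OF z] by fastforce
  qed
  then show ?thesis
    using le1[OF z] by simp
qed

(* The points lying strictly on the inner side of every tangent line of the curve
   t \<mapsto> \<psi> (rcis r t); the outer normal at \<psi> z is z * deriv \<psi> z. *)
definition tangent_halfplanes :: "(complex \<Rightarrow> complex) \<Rightarrow> real \<Rightarrow> complex set" where
  "tangent_halfplanes \<psi> r =
     {c. \<forall>\<theta>. 0 < Re (cnj (rcis r \<theta> * deriv \<psi> (rcis r \<theta>)) * (\<psi> (rcis r \<theta>) - c))}"

lemma convex_tangent_halfplanes: "convex (tangent_halfplanes \<psi> r)"
proof -
  have "tangent_halfplanes \<psi> r = (\<Inter>\<theta>. {c. inner (rcis r \<theta> * deriv \<psi> (rcis r \<theta>)) c <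
           Re (cnj (rcis r \<theta> * deriv \<psi> (rcis r \<theta>)) * \<psi> (rcis r \<theta>))})"
    by (auto simp: tangent_halfplanes_def inner_complex_def algebra_simps)
  then show ?thesis
    by (simp add: convex_INT convex_halfspace_lt)
qed

(* For \<psi>' = exp \<Lambda>, the argument of the outer normal z * \<psi>' z to the curve \<psi> (|z| = r)
   at z = rcis r t. *)
definition tangent_angle :: "(complex \<Rightarrow> complex) \<Rightarrow> real \<Rightarrow> real \<Rightarrow> real" where
  "tangent_angle \<Lambda> r t = t + Im (\<Lambda> (rcis r t))"

context
  fixes \<psi> \<Lambda> :: "complex \<Rightarrow> complex"
  assumes \<psi>_holo: "\<psi> holomorphic_on ball 0 1" and \<Lambda>_holo: "\<Lambda> holomorphic_on ball 0 1"
    and deriv_\<psi>: "\<And>z. z \<in> ball 0 1 \<Longrightarrow> deriv \<psi> z = exp (\<Lambda> z)"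
    and Re_pos: "\<And>z. z \<in> ball 0 1 \<Longrightarrow> Re (1 + z * deriv \<Lambda> z) > 0"
begin

lemma outer_normal_polar:
  assumes "rcis r t \<in> ball 0 1"
  shows "rcis r t * deriv \<psi> (rcis r t) = rcis (r * exp (Re (\<Lambda> (rcis r t)))) (tangent_angle \<Lambda> r t)"
  unfolding deriv_\<psi>[OF assms] exp_eq_polar[of "\<Lambda> (rcis r t)"]
  by (simp add: tangent_angle_def rcis_def flip: cis_mult)

lemma tangent_angle_mono_turn:
  assumes r: "0 < r" "r < 1"
  shows "\<And>x y. x \<le> y \<Longrightarrow> tangent_angle \<Lambda> r x \<le> tangent_angle \<Lambda> r y"
    and "continuous_on S (tangent_angle \<Lambda> r)"
    and "\<And>t. tangent_angle \<Lambda> r (t + 2 * pi) = tangent_angle \<Lambda> r t + 2 * pi"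
proof -
  have in_ball: "rcis r t \<in> ball 0 1" for t
    using r by simp
  have deriv: "(tangent_angle \<Lambda> r has_real_derivative Re (1 + rcis r t * deriv \<Lambda> (rcis r t))) (at t)" for t
  proof -
    have "((\<lambda>t. Im (\<Lambda> (rcis r t))) has_real_derivative Im (\<i> * rcis r t * deriv \<Lambda> (rcis r t))) (at t)"
      by (intro has_real_derivative_Re_Im_rcis holomorphic_derivI[OF \<Lambda>_holo open_ball in_ball])
    from DERIV_add[OF DERIV_ident this] show ?thesis
      unfolding tangent_angle_def[abs_def] by (rule DERIV_cong) simp
  qed
  show "tangent_angle \<Lambda> r x \<le> tangent_angle \<Lambda> r y" if "x \<le> y" for x y
    using DERIV_nonneg_imp_nondecreasing[OF that] deriv Re_pos in_ball by (meson less_imp_le)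
  show "continuous_on S (tangent_angle \<Lambda> r)"
    using deriv by (meson DERIV_isCont continuous_at_imp_continuous_on)
  show "tangent_angle \<Lambda> r (t + 2 * pi) = tangent_angle \<Lambda> r t + 2 * pi" for t
    using rcis_add_2pi_multiple[of r t 1] by (simp add: tangent_angle_def)
qed

lemma boundary_behind_tangent:
  assumes r: "0 < r" "r < 1"
  shows "Re (cnj (rcis r \<theta>\<^sub>0 * deriv \<psi> (rcis r \<theta>\<^sub>0)) * (\<psi> (rcis r \<theta>) - \<psi> (rcis r \<theta>\<^sub>0))) \<le> 0"
proof -
  define A where "A = tangent_angle \<Lambda> r"
  define \<rho> where "\<rho> t = r * exp (Re (\<Lambda> (rcis r t)))" for t
  note angle = tangent_angle_mono_turn[OF r, folded A_def]
  define N where "N = cnj (rcis r \<theta>\<^sub>0 * deriv \<psi> (rcis r \<theta>\<^sub>0))"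
  define v where "v t = Re (N * (\<psi> (rcis r t) - \<psi> (rcis r \<theta>\<^sub>0)))" for t
  have in_ball: "rcis r s \<in> ball 0 1" for s
    using r by simp
  have dv: "(v has_real_derivative - (\<rho> \<theta>\<^sub>0 * \<rho> t) * sin (A t - A \<theta>\<^sub>0)) (at t)" for t
  proof -
    have "(v has_real_derivative Re (\<i> * rcis r t * (N * deriv \<psi> (rcis r t)))) (at t)"
      unfolding v_def
      by (intro has_real_derivative_Re_Im_rcis)
        (auto intro!: derivative_eq_intros holomorphic_derivI[OF \<psi>_holo open_ball in_ball])
    also have "Re (\<i> * rcis r t * (N * deriv \<psi> (rcis r t)))
        = Re (\<i> * N * (rcis r t * deriv \<psi> (rcis r t)))"
      by (rule arg_cong[where f = Re]) (simp add: algebra_simps)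
    also have "\<dots> = - (\<rho> \<theta>\<^sub>0 * \<rho> t) * sin (A t - A \<theta>\<^sub>0)"
      unfolding N_def outer_normal_polar[OF in_ball] A_def \<rho>_def by (rule Re_i_cnj_rcis_mult_rcis)
    finally show ?thesis .
  qed
  obtain \<theta>\<^sub>1 where \<theta>\<^sub>1: "\<theta>\<^sub>0 \<le> \<theta>\<^sub>1" "\<theta>\<^sub>1 \<le> \<theta>\<^sub>0 + 2 * pi" "rcis r \<theta> = rcis r \<theta>\<^sub>1"
    by (rule rcis_in_period)
  have "v \<theta>\<^sub>1 \<le> 0"
  proof (rule nonpos_of_deriv_minus_sin_angle[OF dv _ angle _ _ \<theta>\<^sub>1(1,2)])
    show "0 < \<rho> \<theta>\<^sub>0 * \<rho> t" for t
      using r by (simp add: \<rho>_def)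
    show "v \<theta>\<^sub>0 = 0" "v (\<theta>\<^sub>0 + 2 * pi) = 0"
      using rcis_add_2pi_multiple[of r \<theta>\<^sub>0 1] by (simp_all add: v_def)
  qed
  then show ?thesis
    by (simp add: v_def N_def \<theta>\<^sub>1(3))
qed

lemma image_ball_subset_tangent_halfplanes:
  assumes r: "0 < r" "r < 1"
  shows "\<psi> ` ball 0 r \<subseteq> tangent_halfplanes \<psi> r"
proof (safe, unfold tangent_halfplanes_def, intro CollectI allI)
  fix z \<theta> assume z: "z \<in> ball (0::complex) r"
  define N where "N = cnj (rcis r \<theta> * deriv \<psi> (rcis r \<theta>))"
  have "Re (N * (\<psi> z - \<psi> (rcis r \<theta>))) < 0"
  proof (rule Re_neg_in_ball_if_boundary_nonpos[OF _ r _ _ z])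
    show "(\<lambda>w. N * (\<psi> w - \<psi> (rcis r \<theta>))) holomorphic_on ball 0 1"
      by (intro holomorphic_intros \<psi>_holo)
    show "Re (N * (\<psi> w - \<psi> (rcis r \<theta>))) \<le> 0" if "w \<in> sphere 0 r" for w
      using boundary_behind_tangent[OF r, of \<theta> "Arg w"] that rcis_cmod_Arg[of w]
      by (simp add: N_def)
    show "deriv (\<lambda>w. N * (\<psi> w - \<psi> (rcis r \<theta>))) w \<noteq> 0" if "w \<in> ball 0 r" for w
    proof -
      have w: "w \<in> ball 0 1"
        using that r by simp
      have "((\<lambda>w. N * (\<psi> w - \<psi> (rcis r \<theta>))) has_field_derivative N * exp (\<Lambda> w)) (at w)"
        using holomorphic_derivI[OF \<psi>_holo open_ball w] deriv_\<psi>[OF w]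
        by (auto intro!: derivative_eq_intros)
      moreover have "N \<noteq> 0"
        using r by (simp add: N_def deriv_\<psi>)
      ultimately show ?thesis
        by (simp add: DERIV_imp_deriv)
    qed
  qed
  then show "0 < Re (cnj (rcis r \<theta> * deriv \<psi> (rcis r \<theta>)) * (\<psi> (rcis r \<theta>) - \<psi> z))"
    by (simp add: N_def algebra_simps)
qed

lemma winding_number_tangent_halfplanes:
  assumes r: "0 < r" "r < 1" and c: "c \<in> tangent_halfplanes \<psi> r"
  shows "winding_number ((\<lambda>w. \<psi> w - c) \<circ> circlepath 0 r) 0 = 1"
proof -
  have in_ball: "rcis r t \<in> ball 0 1" for t
    using r by simp
  define n where "n t = rcis r t * exp (\<Lambda> (rcis r t))" for t
  have n_nz: "n t \<noteq> 0" for t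
    using r by (simp add: n_def)
  define y where "y t = (\<psi> (rcis r t) - c) / n t" for t
  have Re_y: "0 < Re (y t)" for t
  proof -
    have "Re (y t) = Re (cnj (n t) * (\<psi> (rcis r t) - c)) / (norm (n t))\<^sup>2"
      by (simp add: y_def Re_divide cmod_power2 algebra_simps)
    then show ?thesis
      using c n_nz by (simp add: tangent_halfplanes_def n_def deriv_\<psi>[OF in_ball])
  qed
  (* \<psi> - c = n * y along the circle, with Re y > 0; this yields a continuous logarithm. *)
  define p where "p t = of_real (ln r) + \<i> * of_real (2 * pi * t) + \<Lambda> (rcis r (2 * pi * t))
      + Ln (y (2 * pi * t))" for t
  have exp_p: "exp (p t) = \<psi> (rcis r (2 * pi * t)) - c" for t
  proof -
    have "y (2 * pi * t) \<noteq> 0"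
      using Re_y[of "2 * pi * t"] by auto
    then have "exp (p t) = n (2 * pi * t) * y (2 * pi * t)"
      using r
      by (auto simp: p_def n_def exp_add rcis_conv_exp exp_of_real)
    then show ?thesis
      using n_nz by (simp add: y_def)
  qed
  have cont_\<Lambda>: "continuous_on UNIV (\<lambda>t. \<Lambda> (rcis r (2 * pi * t)))"
    and cont_\<psi>: "continuous_on UNIV (\<lambda>t. \<psi> (rcis r (2 * pi * t)))"
    using r by (auto intro!: continuous_on_comp_circle holomorphic_on_imp_continuous_on \<Lambda>_holo \<psi>_holo)
  have "continuous_on UNIV (\<lambda>t. y (2 * pi * t))"
    unfolding y_def n_def using n_nz[unfolded n_def]
    by (intro continuous_intros cont_\<Lambda> cont_\<psi>) auto
  moreover have "y t \<notin> \<real>\<^sub>\<le>\<^sub>0" for t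
    using Re_y[of t] by (auto simp: complex_nonpos_Reals_iff)
  ultimately have cont_Ln: "continuous_on UNIV (\<lambda>t. Ln (y (2 * pi * t)))"
    by (intro continuous_on_Ln')
  have "continuous_on UNIV p"
    unfolding p_def by (intro continuous_on_add cont_\<Lambda> cont_Ln continuous_intros)
  moreover have "p 1 = p 0 + 2 * pi * \<i>"
    using rcis_add_2pi_multiple[of r 0 1] by (simp add: p_def y_def n_def)
  ultimately have "winding_number (exp \<circ> p) 0 = 1"
    by (rule winding_number_exp_lift)
  moreover have "exp \<circ> p = (\<lambda>w. \<psi> w - c) \<circ> circlepath 0 r"
    by (simp add: fun_eq_iff exp_p circlepath rcis_conv_exp mult_ac)
  ultimately show ?thesis
    by simp
qed

lemma image_ball_eq_tangent_halfplanes: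
  assumes r: "0 < r" "r < 1"
  shows "\<psi> ` ball 0 r = tangent_halfplanes \<psi> r"
    and "inj_on \<psi> (ball 0 r)"
proof -
  have unique: "\<exists>!z. z \<in> ball 0 r \<and> \<psi> z = c" if c: "c \<in> tangent_halfplanes \<psi> r" for c
  proof -
    have "\<exists>!z. z \<in> ball 0 r \<and> \<psi> z - c = 0"
    proof (rule unique_zero_if_winding_number_eq_1[OF _ r])
      show "(\<lambda>w. \<psi> w - c) holomorphic_on ball 0 1"
        by (intro holomorphic_intros \<psi>_holo)
      show "\<psi> w - c \<noteq> 0" if "w \<in> sphere 0 r" for w
        using c rcis_cmod_Arg[of w] that unfolding tangent_halfplanes_def
        by (metis (no_types, lifting) diff_self mem_Collect_eq mem_sphere_0 mult_zero_right
            zero_complex.sel(1) order_less_irrefl)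
      show "winding_number ((\<lambda>w. \<psi> w - c) \<circ> circlepath 0 r) 0 = 1"
        by (rule winding_number_tangent_halfplanes[OF r c])
    qed
    then show ?thesis
      by simp
  qed
  show image: "\<psi> ` ball 0 r = tangent_halfplanes \<psi> r"
    using image_ball_subset_tangent_halfplanes[OF r] unique by blast
  show "inj_on \<psi> (ball 0 r)"
  proof (rule inj_onI)
    fix z w assume zw: "z \<in> ball 0 r" "w \<in> ball 0 r" "\<psi> z = \<psi> w"
    then have "\<psi> z \<in> tangent_halfplanes \<psi> r"
      using image by blast
    with unique zw show "z = w"
      by metis
  qed
qed

theorem convex_mapping_if_Re_pos: "convex_mapping \<psi>"
proof -
  have in_smaller_ball: "\<exists>r. 0 < r \<and> r < 1 \<and> z \<in> ball 0 r \<and> w \<in> ball 0 r"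
    if "z \<in> ball 0 1" "w \<in> ball 0 1" for z w :: complex
    by (intro exI[of _ "(1 + max (norm z) (norm w)) / 2"])
      (use that in \<open>auto simp: max_def intro: add_pos_nonneg\<close>)
  have "inj_on \<psi> (ball 0 1)"
  proof (rule inj_onI)
    fix z w assume zw: "z \<in> ball 0 1" "w \<in> ball 0 1" "\<psi> z = \<psi> w"
    then obtain r where "0 < r" "r < 1" "z \<in> ball 0 r" "w \<in> ball 0 r"
      using in_smaller_ball by blast
    then show "z = w"
      using image_ball_eq_tangent_halfplanes(2) zw(3) by (meson inj_onD)
  qed
  moreover have "convex (\<psi> ` ball 0 1)"
  proof (rule convexI)
    fix a b and u v :: real
    assume ab: "a \<in> \<psi> ` ball 0 1" "b \<in> \<psi> ` ball 0 1" and uv: "0 \<le> u" "0 \<le> v" "u + v = 1"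
    then obtain z w where zw: "z \<in> ball 0 1" "w \<in> ball 0 1" "a = \<psi> z" "b = \<psi> w"
      by blast
    then obtain r where r: "0 < r" "r < 1" "z \<in> ball 0 r" "w \<in> ball 0 r"
      using in_smaller_ball by blast
    then have "u *\<^sub>R a + v *\<^sub>R b \<in> \<psi> ` ball 0 r"
      using convexD[OF convex_tangent_halfplanes, of a \<psi> r b u v] uv zw
      by (simp add: image_ball_eq_tangent_halfplanes(1)[OF r(1,2), symmetric])
    moreover have "ball 0 r \<subseteq> ball (0::complex) 1"
      using r by auto
    ultimately show "u *\<^sub>R a + v *\<^sub>R b \<in> \<psi> ` ball 0 1"
      by blast
  qed
  ultimately show ?thesis
    using \<psi>_holo by (simp add: convex_mapping_def)
qed

end

section \<open>Jack's lemma\<close>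

lemma Re_directional_derivative_le:
  fixes f :: "complex \<Rightarrow> complex"
  assumes f: "(f has_field_derivative D) (at a)" and \<delta>: "0 < \<delta>"
    and le: "\<And>t. 0 < t \<Longrightarrow> t < \<delta> \<Longrightarrow> Re (c * (f (a + of_real t * b) - f a)) \<le> K * t"
  shows "Re (c * D * b) \<le> K"
proof -
  have "((\<lambda>w. a + w * b) has_field_derivative b) (at 0)"
    by (auto intro!: derivative_eq_intros)
  from DERIV_chain2[OF _ this] f
  have "((\<lambda>w. f (a + w * b)) has_field_derivative D * b) (at 0)"
    by simp
  then have "((\<lambda>w. (f (a + w * b) - f a) / w) \<longlongrightarrow> D * b) (at 0)"
    by (simp add: DERIV_def)
  moreover have "filterlim (\<lambda>t::real. of_real t :: complex) (at 0) (at_right 0)"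
  proof (rule filterlim_atI)
    show "\<forall>\<^sub>F t in at_right 0. (of_real t :: complex) \<noteq> 0"
      using eventually_at_right_less[of 0] by (rule eventually_mono) simp
  qed (auto intro!: tendsto_eq_intros)
  ultimately have "((\<lambda>t::real. (f (a + of_real t * b) - f a) / of_real t) \<longlongrightarrow> D * b) (at_right 0)"
    by (rule filterlim_compose)
  then have "((\<lambda>t::real. Re (c * ((f (a + of_real t * b) - f a) / of_real t))) \<longlongrightarrow> Re (c * (D * b)))
      (at_right 0)"
    by (intro tendsto_intros)
  moreover have "\<forall>\<^sub>F t in at_right 0. 0 < t \<and> t < \<delta>"
    using \<delta> eventually_at_right_field by blast
  then have "\<forall>\<^sub>F t in at_right 0. Re (c * ((f (a + of_real t * b) - f a) / of_real t)) \<le> K"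
  proof (rule eventually_mono)
    fix t :: real assume t: "0 < t \<and> t < \<delta>"
    have "Re (c * ((f (a + of_real t * b) - f a) / of_real t)) = Re (c * (f (a + of_real t * b) - f a)) / t"
      by (simp flip: Re_divide_of_real)
    also have "\<dots> \<le> K"
      using le[of t] t by (simp add: divide_le_eq)
    finally show "Re (c * ((f (a + of_real t * b) - f a) / of_real t)) \<le> K" .
  qed
  ultimately show ?thesis
    using tendsto_upperbound by (fastforce simp: mult.assoc)
qed

lemma Schwarz_Lemma_ball:
  fixes f :: "complex \<Rightarrow> complex"
  assumes f: "f holomorphic_on ball 0 r" and f0: "f 0 = 0"
    and lt1: "\<And>z. norm z < r \<Longrightarrow> norm (f z) < 1" and z: "norm z < r"
  shows "r * norm (f z) \<le> norm z"
proof -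
  have r: "0 < r"
    using z norm_ge_zero[of z] by linarith
  define g where "g \<zeta> = f (of_real r * \<zeta>)" for \<zeta>
  have "norm (of_real r * \<zeta>) < r" if "norm \<zeta> < 1" for \<zeta> :: complex
    using that r by (simp add: norm_mult)
  then have "(\<lambda>\<zeta>. of_real r * \<zeta>) ` ball 0 1 \<subseteq> ball (0::complex) r"
    by auto
  then have g_holo: "g holomorphic_on ball 0 1"
    unfolding g_def by (intro holomorphic_on_compose_gen[OF _ f, unfolded o_def]) (auto intro: holomorphic_intros)
  have g_lt1: "norm (g \<zeta>) < 1" if "norm \<zeta> < 1" for \<zeta>
    using that r by (auto simp: g_def norm_mult intro!: lt1)
  have zr: "norm (z / of_real r) < 1"
    using z r by (simp add: norm_divide)
  have "norm (g (z / of_real r)) \<le> norm (z / of_real r)"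
    by (rule Schwarz_Lemma(1)[OF g_holo _ g_lt1 zr]) (simp add: g_def f0)
  then show ?thesis
    using r by (simp add: g_def norm_divide field_simps)
qed

lemma deriv_at_boundary_maximum:
  fixes w :: "complex \<Rightarrow> complex"
  assumes dw: "(w has_field_derivative w') (at z0)" and norm_a: "norm (w z0) = 1"
    and radial: "\<And>t. 0 < t \<Longrightarrow> t < 1 \<Longrightarrow> norm (w (of_real (1 - t) * z0)) \<le> 1 - t"
    and circle: "\<And>z. norm z = norm z0 \<Longrightarrow> norm (w z) \<le> 1"
  shows "\<exists>k\<ge>1. z0 * w' = of_real k * w z0"
proof -
  define a where "a = w z0"
  have Re_a: "Re (cnj a * y) \<le> norm y" for y
    using complex_Re_le_cmod[of "cnj a * y"] norm_a by (simp add: a_def norm_mult)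
  have aa: "cnj a * a = 1"
    using norm_a by (simp add: a_def complex_norm_square[symmetric] mult.commute)
  have "Re (cnj a * w' * (- z0)) \<le> -1"
  proof (rule Re_directional_derivative_le[OF dw zero_less_one])
    fix t :: real assume t: "0 < t" "t < 1"
    have "Re (cnj a * w (of_real (1 - t) * z0)) \<le> 1 - t"
      using Re_a radial[OF t] order_trans by blast
    moreover have "z0 + of_real t * - z0 = of_real (1 - t) * z0"
      by (simp add: algebra_simps)
    ultimately show "Re (cnj a * (w (z0 + of_real t * - z0) - w z0)) \<le> -1 * t"
      using aa by (simp add: a_def algebra_simps)
  qed
  moreover have "((\<lambda>\<zeta>. w (z0 * exp \<zeta>)) has_field_derivative w' * z0) (at 0)"
    using DERIV_chain2[OF _ DERIV_cmult[OF DERIV_exp, of z0 0]] dw by simp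
  then have angular: "Re (cnj a * (w' * z0) * b) \<le> 0" if "b = \<i> \<or> b = - \<i>" for b
  proof (rule Re_directional_derivative_le[OF _ zero_less_one])
    fix t :: real
    have "norm (z0 * exp (0 + of_real t * b)) = norm z0"
      using that by (auto simp: norm_mult)
    then have "Re (cnj a * w (z0 * exp (0 + of_real t * b))) \<le> 1"
      using Re_a circle order_trans by blast
    then show "Re (cnj a * (w (z0 * exp (0 + of_real t * b)) - w (z0 * exp 0))) \<le> 0 * t"
      using aa by (simp add: a_def algebra_simps)
  qed
  define X where "X = cnj a * (w' * z0)"
  have "Im X = 0"
    using angular[of \<i>] angular[of "- \<i>"] by (simp add: X_def)
  moreover have "1 \<le> Re X"
    using calculation by (simp add: X_def algebra_simps)
  moreover have "z0 * w' = X * a"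
    using aa by (simp add: X_def algebra_simps)
  ultimately show ?thesis
    by (intro exI[of _ "Re X"]) (simp add: a_def complex_eq_iff)
qed

lemma Jack_lemma:
  fixes w :: "complex \<Rightarrow> complex"
  assumes w: "w holomorphic_on ball 0 1" and w0: "w 0 = 0" and z0: "z0 \<in> ball 0 1"
    and ge1: "1 \<le> norm (w z0)" and inner: "\<And>z. norm z < norm z0 \<Longrightarrow> norm (w z) < 1"
  shows "norm (w z0) = 1" and "\<exists>k\<ge>1. z0 * deriv w z0 = of_real k * w z0"
proof -
  define r where "r = norm z0"
  have "z0 \<noteq> 0"
    using ge1 w0 by auto
  then have r: "0 < r" "r < 1"
    using z0 by (simp_all add: r_def)
  have sub: "cball 0 r \<subseteq> ball (0::complex) 1"
    using r by auto
  have circle: "norm (w z) \<le> 1" if "norm z = norm z0" for z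
  proof (rule continuous_on_closure_norm_le[where s = "ball 0 r" and f = w])
    show "continuous_on (closure (ball 0 r)) w"
      using holomorphic_on_imp_continuous_on[OF holomorphic_on_subset[OF w sub]] r by simp
  qed (use that r inner in \<open>auto simp: r_def less_imp_le\<close>)
  then show norm_1: "norm (w z0) = 1"
    using ge1 by (simp add: antisym)
  have "norm (w (of_real (1 - t) * z0)) \<le> 1 - t" if t: "0 < t" "t < 1" for t
  proof -
    have "norm (of_real (1 - t) * z0) = (1 - t) * r"
      using t by (simp only: norm_mult norm_of_real r_def)
    then have "r * norm (w (of_real (1 - t) * z0)) \<le> (1 - t) * r"
      using Schwarz_Lemma_ball[OF holomorphic_on_subset[OF w order_trans[OF ball_subset_cball sub]] w0,
          of "of_real (1 - t) * z0"] t r inner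
      by (auto simp: r_def)
    then show ?thesis
      using r by simp
  qed
  then show "\<exists>k\<ge>1. z0 * deriv w z0 = of_real k * w z0"
    by (intro deriv_at_boundary_maximum[OF holomorphic_derivI[OF w open_ball z0] norm_1 _ circle])
qed

lemma exists_least_norm_point:
  fixes w :: "complex \<Rightarrow> complex"
  assumes w: "continuous_on (ball 0 1) w" and z1: "z1 \<in> ball 0 1" "1 \<le> norm (w z1)"
  obtains z0 where "z0 \<in> ball 0 1" "1 \<le> norm (w z0)" "\<And>z. norm z < norm z0 \<Longrightarrow> norm (w z) < 1"
proof -
  define K where "K = cball 0 (norm z1) \<inter> (\<lambda>z. norm (w z)) -` {1..}"
  have sub: "cball 0 (norm z1) \<subseteq> ball 0 1"
    using z1 by auto
  have "closed K"
    unfolding K_def using continuous_on_subset[OF w sub]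
    by (intro continuous_closed_preimage) (auto intro: continuous_intros)
  moreover have "K = cball 0 (norm z1) \<inter> K"
    by (auto simp: K_def)
  ultimately have "compact K"
    by (metis compact_Int_closed compact_cball)
  moreover have "z1 \<in> K"
    using z1 by (simp add: K_def)
  ultimately obtain z0 where z0: "z0 \<in> K" "\<And>z. z \<in> K \<Longrightarrow> norm z0 \<le> norm z"
    using continuous_attains_inf[OF _ _ continuous_on_norm_id[of K]] by blast
  show thesis
  proof (rule that)
    show "z0 \<in> ball 0 1" "1 \<le> norm (w z0)"
      using z0(1) z1(1) sub by (auto simp: K_def)
    show "norm (w z) < 1" if "norm z < norm z0" for z
    proof (rule ccontr)
      assume "\<not> norm (w z) < 1"
      then have "z \<in> K"
        using that z0(1) by (auto simp: K_def)
      then show False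
        using z0(2) that by fastforce
    qed
  qed
qed

lemma Jack_lemma_half_plane:
  fixes P :: "complex \<Rightarrow> complex"
  assumes P: "P holomorphic_on ball 0 1" "P 0 = 1" "\<And>z. z \<in> ball 0 1 \<Longrightarrow> P z \<noteq> 0"
    and z1: "z1 \<in> ball 0 1" "Re (P z1) \<le> 1/2"
  obtains z0 k where "z0 \<in> ball 0 1" "z0 \<noteq> 0" "1 \<le> k" "Re (P z0) = 1/2"
    "z0 * deriv P z0 / P z0 = of_real k * (P z0 - 1)"
proof -
  (* w maps the half-plane Re P > 1/2 onto the unit disc. *)
  define w where "w z = 1 - 1 / P z" for z
  have w: "w holomorphic_on ball 0 1"
    unfolding w_def using P by (intro holomorphic_intros) auto
  have w0: "w 0 = 0"
    by (simp add: w_def P(2))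
  have sq: "(norm (P z - 1))\<^sup>2 - (norm (P z))\<^sup>2 = 1 - 2 * Re (P z)" for z
    by (simp only: cmod_power2) (simp add: power2_eq_square algebra_simps)
  have norm_w: "norm (w z) = norm (P z - 1) / norm (P z)" if "z \<in> ball 0 1" for z
  proof -
    have "w z = (P z - 1) / P z"
      using P(3)[OF that] by (simp add: w_def field_simps)
    then show ?thesis
      by (simp add: norm_divide)
  qed
  have norm_w_ge_iff: "1 \<le> norm (w z) \<longleftrightarrow> Re (P z) \<le> 1/2" if "z \<in> ball 0 1" for z
  proof -
    have "1 \<le> norm (w z) \<longleftrightarrow> norm (P z) \<le> norm (P z - 1)"
      using P(3)[OF that] by (simp add: norm_w[OF that] le_divide_eq)
    also have "\<dots> \<longleftrightarrow> (norm (P z))\<^sup>2 \<le> (norm (P z - 1))\<^sup>2"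
      by (simp add: abs_le_square_iff[symmetric])
    finally show ?thesis
      using sq[of z] by linarith
  qed
  obtain z0 where z0: "z0 \<in> ball 0 1" "1 \<le> norm (w z0)" "\<And>z. norm z < norm z0 \<Longrightarrow> norm (w z) < 1"
    using exists_least_norm_point[OF holomorphic_on_imp_continuous_on[OF w] z1(1)]
      norm_w_ge_iff[OF z1(1)] z1(2) by blast
  obtain k where k: "1 \<le> k" "z0 * deriv w z0 = of_real k * w z0"
    using Jack_lemma(2)[OF w w0 z0] by blast
  have Pz0: "P z0 \<noteq> 0"
    using P(3) z0(1) .
  have "(w has_field_derivative deriv P z0 / (P z0)\<^sup>2) (at z0)"
    unfolding w_def using holomorphic_derivI[OF P(1) open_ball z0(1)] Pz0
    by (auto intro!: derivative_eq_intros simp: power2_eq_square)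
  then have "z0 * deriv P z0 / P z0 = of_real k * (P z0 - 1)"
    using k(2) Pz0 by (simp add: DERIV_imp_deriv w_def power2_eq_square field_simps)
  moreover have "norm (P z0 - 1) = norm (P z0)"
    using Jack_lemma(1)[OF w w0 z0] norm_w[OF z0(1)] Pz0 by simp
  then have "Re (P z0) = 1/2"
    using sq[of z0] by simp
  moreover have "z0 \<noteq> 0"
    using z0(2) w0 by auto
  ultimately show thesis
    using that z0(1) k(1) by blast
qed

lemma convex_mapping_subordination:
  assumes conv: "convex_mapping \<phi>" and z: "z \<in> ball 0 1" and x: "norm x \<le> 1" and t: "0 \<le> t" "t \<le> 1"
  obtains u where "norm u \<le> norm z" "\<phi> u = of_real t * \<phi> (x * z) + of_real (1 - t) * \<phi> z"
proof -
  have \<phi>: "\<phi> holomorphic_on ball 0 1" "inj_on \<phi> (ball 0 1)" "convex (\<phi> ` ball 0 1)"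
    using conv by (auto simp: convex_mapping_def)
  obtain g where g: "g holomorphic_on \<phi> ` ball 0 1" "\<And>u. u \<in> ball 0 1 \<Longrightarrow> g (\<phi> u) = u"
    using holomorphic_has_inverse[OF \<phi>(1) open_ball \<phi>(2)] by metis
  have x_ball: "x * \<zeta> \<in> ball 0 1" if "\<zeta> \<in> ball 0 1" for \<zeta>
    using that x by (auto simp: norm_mult intro: mult_le_one le_less_trans[OF mult_left_le_one_le])
  define G where "G \<zeta> = of_real t * \<phi> (x * \<zeta>) + of_real (1 - t) * \<phi> \<zeta>" for \<zeta>
  have G_in: "G \<zeta> \<in> \<phi> ` ball 0 1" if "\<zeta> \<in> ball 0 1" for \<zeta>
    using convexD[OF \<phi>(3), of "\<phi> (x * \<zeta>)" "\<phi> \<zeta>" t "1 - t"] x_ball[OF that] that t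
    by (simp add: G_def scaleR_conv_of_real)
  have "(\<lambda>\<zeta>. \<phi> (x * \<zeta>)) holomorphic_on ball 0 1"
    using x_ball by (intro holomorphic_on_compose_gen[OF _ \<phi>(1), unfolded o_def]) (auto intro: holomorphic_intros)
  then have "G holomorphic_on ball 0 1"
    unfolding G_def[abs_def] by (intro holomorphic_intros \<phi>(1))
  then have "(\<lambda>\<zeta>. g (G \<zeta>)) holomorphic_on ball 0 1"
    using G_in by (intro holomorphic_on_compose_gen[OF _ g(1), unfolded o_def]) auto
  moreover have "g (G 0) = 0"
    using g(2)[of 0] by (simp add: G_def algebra_simps)
  moreover have "norm (g (G \<zeta>)) < 1" if "norm \<zeta> < 1" for \<zeta>
    using G_in[of \<zeta>] that g(2) by auto
  ultimately have "norm (g (G z)) \<le> norm z"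
    using Schwarz_Lemma(1)[of "\<lambda>\<zeta>. g (G \<zeta>)"] z by simp
  moreover have "\<phi> (g (G z)) = G z"
    using G_in[OF z] g(2) by auto
  ultimately show thesis
    using that by (simp add: G_def)
qed

lemma convex_mapping_support:
  assumes conv: "convex_mapping \<phi>" and z: "z \<in> ball 0 1" and x: "norm x \<le> 1"
  shows "Re (cnj (z * deriv \<phi> z) * (\<phi> (x * z) - \<phi> z)) \<le> 0"
proof -
  have \<phi>: "\<phi> holomorphic_on ball 0 1" "inj_on \<phi> (ball 0 1)"
    using conv by (auto simp: convex_mapping_def)
  obtain g where g: "g holomorphic_on \<phi> ` ball 0 1" "\<And>u. u \<in> ball 0 1 \<Longrightarrow> g (\<phi> u) = u"
    and g': "\<And>u. u \<in> ball 0 1 \<Longrightarrow> deriv \<phi> u * deriv g (\<phi> u) = 1"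
    using holomorphic_has_inverse[OF \<phi>(1) open_ball \<phi>(2)] by metis
  define a where "a = \<phi> z"
  define b where "b = \<phi> (x * z) - \<phi> z"
  have "open (\<phi> ` ball 0 1)"
    by (rule open_mapping_thm3[OF \<phi>(1) open_ball \<phi>(2)])
  then have dg: "(g has_field_derivative deriv g a) (at a)"
    using z by (intro holomorphic_derivI[OF g(1)]) (auto simp: a_def)
  have "Re (cnj z * deriv g a * b) \<le> 0"
  proof (rule Re_directional_derivative_le[OF dg zero_less_one])
    fix t :: real assume t: "0 < t" "t < 1"
    obtain u where u: "norm u \<le> norm z" "\<phi> u = of_real t * \<phi> (x * z) + of_real (1 - t) * \<phi> z"
      using convex_mapping_subordination[OF conv z x, of t] t by auto
    have "norm u < 1"
      using u(1) z by simp
    moreover have "a + of_real t * b = \<phi> u"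
      by (simp add: u(2) a_def b_def algebra_simps)
    ultimately have "g (a + of_real t * b) = u"
      using g(2) by simp
    moreover have "Re (cnj z * u) \<le> norm z * norm z"
      using complex_Re_le_cmod[of "cnj z * u"] mult_left_mono[OF u(1), of "norm z"]
      by (simp add: norm_mult)
    ultimately have "Re (cnj z * g (a + of_real t * b)) \<le> norm z * norm z"
      by simp
    moreover have "Re (cnj z * z) = norm z * norm z"
      by (simp add: complex_norm_square[symmetric] power2_eq_square mult.commute)
    ultimately show "Re (cnj z * (g (a + of_real t * b) - g a)) \<le> 0 * t"
      using g(2)[OF z] by (simp add: a_def algebra_simps)
  qed
  moreover have "cnj (z * deriv \<phi> z) * b = of_real ((norm (deriv \<phi> z))\<^sup>2) * (cnj z * deriv g a * b)"
  proof -
    have d: "deriv \<phi> z \<noteq> 0"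
      using g'[OF z] by auto
    have dg: "deriv g a = 1 / deriv \<phi> z"
      using g'[OF z] d by (simp add: a_def eq_divide_eq mult.commute)
    show ?thesis
      unfolding dg using d complex_norm_square[of "deriv \<phi> z"] by (simp add: field_simps)
  qed
  moreover have "Re (of_real ((norm (deriv \<phi> z))\<^sup>2) * X) = (norm (deriv \<phi> z))\<^sup>2 * Re X" for X
    by simp
  ultimately show ?thesis
    unfolding b_def[symmetric] by (metis mult_nonneg_nonpos zero_le_power2)
qed

lemma second_derivative_nonpos_at_max:
  fixes u u' :: "real \<Rightarrow> real"
  assumes u: "\<And>t. (u has_real_derivative u' t) (at t)" and u': "(u' has_real_derivative D) (at a)"
    and max: "\<And>t. u t \<le> u a"
  shows "D \<le> 0"
proof (rule ccontr)
  assume "\<not> D \<le> 0"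
  then obtain d where d: "0 < d" "\<And>h. 0 < h \<Longrightarrow> h < d \<Longrightarrow> u' a < u' (a + h)"
    using DERIV_pos_inc_right[OF u'] by force
  have "u' a = 0"
    using DERIV_local_max[OF u zero_less_one] max by blast
  obtain \<xi> where \<xi>: "a < \<xi>" "\<xi> < a + d / 2" "u (a + d / 2) - u a = (a + d / 2 - a) * u' \<xi>"
    using MVT2[of a "a + d / 2" u u'] u d(1) by auto
  have "0 < u' \<xi>"
    using d(2)[of "\<xi> - a"] \<xi> \<open>u' a = 0\<close> by simp
  then have "0 < (a + d / 2 - a) * u' \<xi>"
    using d(1) by simp
  then have "u a < u (a + d / 2)"
    using \<xi>(3) by linarith
  then show False
    using max[of "a + d / 2"] by simp
qed

lemma convex_mapping_Re_nonneg:
  assumes conv: "convex_mapping \<phi>" and z: "z \<in> ball 0 1"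
  shows "0 \<le> Re (1 + z * deriv (deriv \<phi>) z / deriv \<phi> z)"
proof (cases "z = 0")
  case False
  have \<phi>: "\<phi> holomorphic_on ball 0 1" "inj_on \<phi> (ball 0 1)"
    using conv by (auto simp: convex_mapping_def)
  have \<phi>': "deriv \<phi> holomorphic_on ball 0 1"
    by (rule holomorphic_deriv[OF \<phi>(1) open_ball])
  have d: "deriv \<phi> z \<noteq> 0"
    by (rule holomorphic_injective_imp_regular[OF \<phi>(1) open_ball \<phi>(2) z])
  define r where "r = norm z"
  define \<theta> where "\<theta> = Arg z"
  have z_eq: "z = rcis r \<theta>"
    by (simp add: r_def \<theta>_def rcis_cmod_Arg)
  have in_ball: "rcis r t \<in> ball 0 1" for t
    using z by (simp add: r_def)
  (* By the support inequality u is maximal at \<theta>, and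
     u'' \<theta> = - |z \<phi>' z|^2 * Re (1 + z \<phi>'' z / \<phi>' z). *)
  define N where "N = cnj (z * deriv \<phi> z)"
  define u where "u t = Re (N * \<phi> (rcis r t))" for t
  define u' where "u' t = Re (\<i> * rcis r t * (N * deriv \<phi> (rcis r t)))" for t
  have du: "(u has_real_derivative u' t) (at t)" for t
    unfolding u_def u'_def
    by (intro has_real_derivative_Re_Im_rcis)
      (auto intro!: derivative_eq_intros holomorphic_derivI[OF \<phi>(1) open_ball in_ball])
  have "(u' has_real_derivative
      Re (\<i> * rcis r \<theta> * (\<i> * N * (deriv \<phi> z + z * deriv (deriv \<phi>) z)))) (at \<theta>)"
    unfolding u'_def mult.assoc[of "\<i> * rcis r _"] z_eq
    by (intro has_real_derivative_Re_Im_rcis)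
      (auto intro!: derivative_eq_intros holomorphic_derivI[OF \<phi>' open_ball in_ball]
        holomorphic_derivI[OF \<phi>(1) open_ball in_ball] simp: algebra_simps)
  moreover have "u t \<le> u \<theta>" for t
  proof -
    have "rcis r t = cis (t - \<theta>) * z"
      by (simp add: z_eq rcis_def cis_mult mult.left_commute)
    then have "Re (N * (\<phi> (rcis r t) - \<phi> z)) \<le> 0"
      using convex_mapping_support[OF conv z, of "cis (t - \<theta>)"] by (simp add: N_def)
    then show ?thesis
      by (simp add: u_def z_eq algebra_simps)
  qed
  ultimately have "Re (\<i> * z * (\<i> * N * (deriv \<phi> z + z * deriv (deriv \<phi>) z))) \<le> 0"
    using second_derivative_nonpos_at_max[OF du] z_eq by metis
  moreover have "\<i> * z * (\<i> * N * (deriv \<phi> z + z * deriv (deriv \<phi>) z))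
      = - of_real ((norm (z * deriv \<phi> z))\<^sup>2) * (1 + z * deriv (deriv \<phi>) z / deriv \<phi> z)"
    using d complex_norm_square[of "z * deriv \<phi> z"] by (simp add: N_def field_simps)
  moreover have "0 < (norm (z * deriv \<phi> z))\<^sup>2"
    using False d by simp
  ultimately show ?thesis
    by (simp add: zero_le_mult_iff)
qed simp

lemma convex_mapping_Re_pos:
  assumes conv: "convex_mapping \<phi>" and z: "z \<in> ball 0 1"
  shows "0 < Re (1 + z * deriv (deriv \<phi>) z / deriv \<phi> z)"
proof -
  have \<phi>: "\<phi> holomorphic_on ball 0 1" "inj_on \<phi> (ball 0 1)"
    using conv by (auto simp: convex_mapping_def)
  define X where "X u = 1 + u * deriv (deriv \<phi>) u / deriv \<phi> u" for u
  have "X holomorphic_on ball 0 1"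
    unfolding X_def[abs_def] using holomorphic_injective_imp_regular[OF \<phi>(1) open_ball \<phi>(2)]
    by (intro holomorphic_intros holomorphic_deriv \<phi>(1) open_ball) auto
  then have G: "(\<lambda>u. exp (- X u)) holomorphic_on ball 0 1"
    by (intro holomorphic_intros)
  have ge: "0 \<le> Re (X u)" if "u \<in> ball 0 1" for u
    unfolding X_def by (rule convex_mapping_Re_nonneg[OF conv that])
  show ?thesis
  proof (rule ccontr)
    assume "\<not> ?thesis"
    then have X0: "Re (X z) = 0"
      using ge[OF z] by (simp add: X_def)
    have "norm (exp (- X u)) \<le> norm (exp (- X z))" if "u \<in> ball 0 1" for u
      using ge[OF that] X0 by simp
    then have "(\<lambda>u. exp (- X u)) constant_on ball 0 1"
      using maximum_modulus_principle[OF G open_ball connected_ball open_ball subset_refl z] by blast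
    then have "norm (exp (- X 0)) = norm (exp (- X z))"
      using z by (metis (no_types, lifting) centre_in_ball constant_on_def zero_less_one)
    then show False
      using X0 by (simp add: X_def)
  qed
qed

lemma abs_Im_less_pi_half_if_Re_exp_pos:
  assumes L: "continuous_on S L" and S: "connected S" and a: "a \<in> S" "\<bar>Im (L a)\<bar> < pi / 2"
    and Re_pos: "\<And>z. z \<in> S \<Longrightarrow> 0 < Re (exp (L z))" and z: "z \<in> S"
  shows "\<bar>Im (L z)\<bar> < pi / 2"
proof (rule ccontr)
  assume *: "\<not> ?thesis"
  define T where "T = (\<lambda>z. Im (L z)) ` S"
  have T: "connected T" "Im (L a) \<in> T" "Im (L z) \<in> T"
    using S a z unfolding T_def by (auto intro!: connected_continuous_image continuous_intros L)
  obtain y where y: "y \<in> T" "y = pi / 2 \<or> y = - (pi / 2)"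
  proof (cases "0 \<le> Im (L z)")
    case True
    then have "pi / 2 \<in> T"
      using connectedD_interval[OF T] a * by auto
    then show ?thesis
      using that by blast
  next
    case False
    then have "- (pi / 2) \<in> T"
      using connectedD_interval[OF T(1,3,2)] a * by auto
    then show ?thesis
      using that by blast
  qed
  then obtain w where w: "w \<in> S" "Im (L w) = pi / 2 \<or> Im (L w) = - (pi / 2)"
    by (auto simp: T_def)
  then have "cos (Im (L w)) = 0"
    by (metis cos_minus cos_pi_half)
  then have "Re (exp (L w)) = 0"
    by (simp add: Re_exp)
  then show False
    using Re_pos[OF w(1)] by simp
qed

lemma abs_Im_Ln_one_plus_le_arcsin:
  fixes u :: complex
  assumes u: "norm u < 1"
  shows "\<bar>Im (Ln (1 + u))\<bar> \<le> arcsin (norm u)"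
proof -
  have Re_pos: "0 < Re (1 + u)"
    using complex_Re_le_cmod[of "-u"] u by simp
  define \<theta> where "\<theta> = Im (Ln (1 + u))"
  have \<theta>: "\<bar>\<theta>\<bar> < pi / 2"
    unfolding \<theta>_def using Re_Ln_pos_lt_imp Re_pos by simp
  have nz: "1 + u \<noteq> 0"
    using Re_pos by (metis order_less_irrefl zero_complex.sel(1))
  have "Im (1 + u) = norm (1 + u) * sin \<theta>"
    using Im_exp[of "Ln (1 + u)"] nz by (simp add: \<theta>_def)
  moreover have "\<bar>Im u\<bar> \<le> norm u * norm (1 + u)"
  proof -
    have "(norm u * norm (1 + u))\<^sup>2 - (Im u)\<^sup>2 = (Re u + (norm u)\<^sup>2)\<^sup>2"
      unfolding power_mult_distrib by (simp only: cmod_power2) (simp add: power2_eq_square algebra_simps)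
    then have "(Im u)\<^sup>2 \<le> (norm u * norm (1 + u))\<^sup>2"
      by (metis diff_ge_0_iff_ge zero_le_power2)
    then show ?thesis
      using abs_le_square_iff[of "Im u" "norm u * norm (1 + u)"] by simp
  qed
  ultimately have "\<bar>sin \<theta>\<bar> \<le> norm u"
    using nz by (simp add: abs_mult mult.commute)
  moreover have "\<bar>sin \<theta>\<bar> = sin \<bar>\<theta>\<bar>"
  proof -
    have "\<bar>sin \<theta>\<bar> = \<bar>sin \<bar>\<theta>\<bar>\<bar>"
      by (simp add: abs_if)
    also have "\<dots> = sin \<bar>\<theta>\<bar>"
      using \<theta> by (intro abs_of_nonneg sin_ge_zero) auto
    finally show ?thesis .
  qed
  ultimately have "arcsin (sin \<bar>\<theta>\<bar>) \<le> arcsin (norm u)"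
    using u by (intro arcsin_le_arcsin) auto
  then show ?thesis
    using \<theta> by (simp add: arcsin_sin \<theta>_def)
qed

lemma Re_exp_mult_ratio_pos:
  fixes u v X :: complex
  assumes u: "norm u < 1" and v: "norm v < 1"
    and bound: "\<bar>Im X\<bar> + arcsin (norm u) + arcsin (norm v) < pi / 2"
  shows "0 < Re (exp X * (1 + u) / (1 + v))"
proof -
  have nz: "1 + w \<noteq> 0" if "norm w < 1" for w :: complex
  proof
    assume "1 + w = 0"
    then have "w = -1"
      by (simp add: add_eq_0_iff)
    with that show False
      by simp
  qed
  define Y where "Y = X + Ln (1 + u) - Ln (1 + v)"
  have "exp Y = exp X * (1 + u) / (1 + v)"
    using nz[OF u] nz[OF v] by (simp add: Y_def exp_add exp_diff)
  moreover have "Im Y = Im X + Im (Ln (1 + u)) - Im (Ln (1 + v))"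
    by (simp add: Y_def)
  then have "\<bar>Im Y\<bar> < pi / 2"
    using abs_Im_Ln_one_plus_le_arcsin[OF u] abs_Im_Ln_one_plus_le_arcsin[OF v] bound by arith
  then have "0 < cos (Im Y)"
    by (intro cos_gt_zero_pi) auto
  then have "0 < Re (exp Y)"
    by (simp add: Re_exp)
  ultimately show ?thesis
    by simp
qed

lemma linepath_integral_has_field_derivative:
  assumes f: "f holomorphic_on S" and S: "convex S" "open S" and a: "a \<in> S" and z: "z \<in> S"
  shows "((\<lambda>x. contour_integral (linepath a x) f) has_field_derivative f z) (at z)"
proof (rule triangle_contour_integrals_starlike_primitive[OF holomorphic_on_imp_continuous_on[OF f] a S(2) z])
  show "closed_segment a y \<subseteq> S" if "y \<in> S" for y
    using that a S(1) by (simp add: closed_segment_subset)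
  fix b c assume "closed_segment b c \<subseteq> S"
  then have "convex hull {a, b, c} \<subseteq> S"
    using a S(1) by (intro hull_minimal) auto
  then have "(f has_contour_integral 0) (linepath a b +++ linepath b c +++ linepath c a)"
    by (intro Cauchy_theorem_triangle holomorphic_on_subset[OF f])
  then show "contour_integral (linepath a b) f + contour_integral (linepath b c) f
      + contour_integral (linepath c a) f = 0"
    by (rule has_chain_integral_chain_integral3)
qed

(* quot_z \<phi> z = \<phi> z / z and starlike_ratio \<phi> z = z * deriv \<phi> z / \<phi> z, both given the value 1
   at the origin, where they are continuous for normalized \<phi>. *)
definition quot_z :: "(complex \<Rightarrow> complex) \<Rightarrow> complex \<Rightarrow> complex" where
  "quot_z \<phi> z = (if z = 0 then 1 else \<phi> z / z)"

definition starlike_ratio :: "(complex \<Rightarrow> complex) \<Rightarrow> complex \<Rightarrow> complex" where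
  "starlike_ratio \<phi> z = deriv \<phi> z / quot_z \<phi> z"

definition log_quot :: "(complex \<Rightarrow> complex) \<Rightarrow> complex \<Rightarrow> complex" where
  "log_quot \<phi> = (SOME L. log_quot_branch \<phi> L)"

context
  fixes \<phi> :: "complex \<Rightarrow> complex"
  assumes \<phi>_holo: "\<phi> holomorphic_on ball 0 1" and \<phi>_inj: "inj_on \<phi> (ball 0 1)"
    and \<phi>_0: "\<phi> 0 = 0" and deriv_\<phi>_0: "deriv \<phi> 0 = 1"
begin

lemma univalent_deriv_nonzero: "z \<in> ball 0 1 \<Longrightarrow> deriv \<phi> z \<noteq> 0"
  by (rule holomorphic_injective_imp_regular[OF \<phi>_holo open_ball \<phi>_inj])

lemma univalent_nonzero: "z \<in> ball 0 1 \<Longrightarrow> z \<noteq> 0 \<Longrightarrow> \<phi> z \<noteq> 0"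
  using \<phi>_inj \<phi>_0 by (metis centre_in_ball inj_onD zero_less_one)

lemma quot_z_holomorphic: "quot_z \<phi> holomorphic_on ball 0 1"
proof -
  have "(\<lambda>z. if z = 0 then deriv \<phi> 0 else (\<phi> z - \<phi> 0) / (z - 0)) holomorphic_on ball 0 1"
    by (rule pole_lemma[OF \<phi>_holo]) simp
  also have "(\<lambda>z. if z = 0 then deriv \<phi> 0 else (\<phi> z - \<phi> 0) / (z - 0)) = quot_z \<phi>"
    by (simp add: fun_eq_iff quot_z_def \<phi>_0 deriv_\<phi>_0)
  finally show ?thesis .
qed

lemma quot_z_nonzero: "z \<in> ball 0 1 \<Longrightarrow> quot_z \<phi> z \<noteq> 0"
  using univalent_nonzero by (simp add: quot_z_def)

lemma starlike_ratio_holomorphic: "starlike_ratio \<phi> holomorphic_on ball 0 1"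
  unfolding starlike_ratio_def[abs_def] using quot_z_nonzero
  by (intro holomorphic_intros holomorphic_deriv \<phi>_holo quot_z_holomorphic) auto

lemma starlike_ratio_nonzero: "z \<in> ball 0 1 \<Longrightarrow> starlike_ratio \<phi> z \<noteq> 0"
  using quot_z_nonzero univalent_deriv_nonzero by (simp add: starlike_ratio_def)

lemma has_field_derivative_quot_z:
  assumes z: "z \<in> ball 0 1" "z \<noteq> 0"
  shows "(quot_z \<phi> has_field_derivative (deriv \<phi> z * z - \<phi> z) / z\<^sup>2) (at z)"
proof -
  have "((\<lambda>u. \<phi> u / u) has_field_derivative (deriv \<phi> z * z - \<phi> z) / z\<^sup>2) (at z)"
    using holomorphic_derivI[OF \<phi>_holo open_ball z(1)] z(2)
    by (auto intro!: derivative_eq_intros simp: power2_eq_square)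
  then show ?thesis
    by (rule has_field_derivative_transform_within_open[of _ _ _ "ball 0 1 - {0}"])
      (use z in \<open>auto simp: quot_z_def\<close>)
qed

lemma logderiv_quot_z:
  assumes z: "z \<in> ball 0 1" "z \<noteq> 0"
  shows "z * deriv (quot_z \<phi>) z / quot_z \<phi> z = starlike_ratio \<phi> z - 1"
  using DERIV_imp_deriv[OF has_field_derivative_quot_z[OF z]] univalent_nonzero[OF z] z(2)
  by (simp add: starlike_ratio_def quot_z_def power2_eq_square field_simps)

lemma logderiv_starlike_ratio:
  assumes z: "z \<in> ball 0 1" "z \<noteq> 0"
  shows "z * deriv (starlike_ratio \<phi>) z / starlike_ratio \<phi> z
      = 1 + z * deriv (deriv \<phi>) z / deriv \<phi> z - starlike_ratio \<phi> z"
proof -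
  have \<phi>z: "\<phi> z \<noteq> 0" "deriv \<phi> z \<noteq> 0"
    using univalent_nonzero[OF z] univalent_deriv_nonzero[OF z(1)] .
  define E where "E = ((deriv \<phi> z + z * deriv (deriv \<phi>) z) * \<phi> z - z * deriv \<phi> z * deriv \<phi> z)
      / (\<phi> z * \<phi> z)"
  have "((\<lambda>u. u * deriv \<phi> u / \<phi> u) has_field_derivative E) (at z)"
    unfolding E_def using \<phi>z
    by (auto intro!: derivative_eq_intros holomorphic_derivI[OF \<phi>_holo open_ball z(1)]
        holomorphic_derivI[OF holomorphic_deriv[OF \<phi>_holo open_ball] open_ball z(1)]
        simp: power2_eq_square field_simps)
  then have "(starlike_ratio \<phi> has_field_derivative E) (at z)"
    by (rule has_field_derivative_transform_within_open[of _ _ _ "ball 0 1 - {0}"])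
      (use z univalent_nonzero in \<open>auto simp: starlike_ratio_def quot_z_def\<close>)
  then show ?thesis
    using \<phi>z z(2) by (simp add: DERIV_imp_deriv E_def starlike_ratio_def quot_z_def field_simps)
qed

lemma Re_starlike_ratio_gt_half:
  assumes conv: "convex_mapping \<phi>" and z: "z \<in> ball 0 1"
  shows "1/2 < Re (starlike_ratio \<phi> z)"
proof (rule ccontr)
  assume "\<not> ?thesis"
  then have le: "Re (starlike_ratio \<phi> z) \<le> 1/2"
    by simp
  have "starlike_ratio \<phi> 0 = 1"
    by (simp add: starlike_ratio_def quot_z_def deriv_\<phi>_0)
  then obtain z0 k where z0: "z0 \<in> ball 0 1" "z0 \<noteq> 0" "1 \<le> k" "Re (starlike_ratio \<phi> z0) = 1/2"
    "z0 * deriv (starlike_ratio \<phi>) z0 / starlike_ratio \<phi> z0 = of_real k * (starlike_ratio \<phi> z0 - 1)"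
    using Jack_lemma_half_plane[OF starlike_ratio_holomorphic _ starlike_ratio_nonzero z le] by blast
  have "1 + z0 * deriv (deriv \<phi>) z0 / deriv \<phi> z0
      = starlike_ratio \<phi> z0 + of_real k * (starlike_ratio \<phi> z0 - 1)"
    using logderiv_starlike_ratio[OF z0(1,2)] z0(5) by algebra
  then have "Re (1 + z0 * deriv (deriv \<phi>) z0 / deriv \<phi> z0) = 1/2 + k * (1/2 - 1)"
    by (simp add: z0(4))
  also have "\<dots> \<le> 0"
    using z0(3) by simp
  finally show False
    using convex_mapping_Re_pos[OF conv z0(1)] by simp
qed

lemma Re_quot_z_gt_half:
  assumes conv: "convex_mapping \<phi>" and z: "z \<in> ball 0 1"
  shows "1/2 < Re (quot_z \<phi> z)"
proof (rule ccontr)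
  assume "\<not> ?thesis"
  then have le: "Re (quot_z \<phi> z) \<le> 1/2"
    by simp
  have "quot_z \<phi> 0 = 1"
    by (simp add: quot_z_def)
  then obtain z0 k where z0: "z0 \<in> ball 0 1" "z0 \<noteq> 0" "1 \<le> k" "Re (quot_z \<phi> z0) = 1/2"
    "z0 * deriv (quot_z \<phi>) z0 / quot_z \<phi> z0 = of_real k * (quot_z \<phi> z0 - 1)"
    using Jack_lemma_half_plane[OF quot_z_holomorphic _ quot_z_nonzero z le] by blast
  have "starlike_ratio \<phi> z0 = 1 + of_real k * (quot_z \<phi> z0 - 1)"
    using logderiv_quot_z[OF z0(1,2)] z0(5) by algebra
  then have "Re (starlike_ratio \<phi> z0) = 1 + k * (1/2 - 1)"
    by (simp add: z0(4))
  also have "\<dots> \<le> 1/2"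
    using z0(3) by simp
  finally show False
    using Re_starlike_ratio_gt_half[OF conv z0(1)] by simp
qed

lemma log_quot_branch_log_quot: "log_quot_branch \<phi> (log_quot \<phi>)"
proof -
  obtain g where g: "g holomorphic_on ball 0 1" "\<And>z. z \<in> ball 0 1 \<Longrightarrow> quot_z \<phi> z = exp (g z)"
    using contractible_imp_holomorphic_log[OF quot_z_holomorphic
        convex_imp_contractible[OF convex_ball] quot_z_nonzero] by metis
  have "exp (g 0) = 1"
    using g(2)[of 0] by (simp add: quot_z_def)
  then have "exp (g z - g 0) = \<phi> z / z" if "z \<in> ball 0 1 - {0}" for z
    using g(2)[of z] that by (simp add: exp_diff quot_z_def)
  then have "log_quot_branch \<phi> (\<lambda>z. g z - g 0)"
    using g(1) by (auto simp: log_quot_branch_def intro!: holomorphic_intros)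
  then show ?thesis
    unfolding log_quot_def by (rule someI[of "log_quot_branch \<phi>"])
qed

lemma log_quot_holomorphic: "log_quot \<phi> holomorphic_on ball 0 1"
  using log_quot_branch_log_quot by (simp add: log_quot_branch_def)

lemma exp_log_quot: "z \<in> ball 0 1 \<Longrightarrow> exp (log_quot \<phi> z) = quot_z \<phi> z"
  using log_quot_branch_log_quot by (cases "z = 0") (auto simp: log_quot_branch_def quot_z_def)

lemma logderiv_log_quot:
  assumes z: "z \<in> ball 0 1" "z \<noteq> 0"
  shows "z * deriv (log_quot \<phi>) z = starlike_ratio \<phi> z - 1"
proof -
  have "((\<lambda>u. exp (log_quot \<phi> u)) has_field_derivative exp (log_quot \<phi> z) * deriv (log_quot \<phi>) z) (at z)"
    by (auto intro!: derivative_eq_intros holomorphic_derivI[OF log_quot_holomorphic open_ball z(1)])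
  then have "(quot_z \<phi> has_field_derivative exp (log_quot \<phi> z) * deriv (log_quot \<phi>) z) (at z)"
    by (rule has_field_derivative_transform_within_open[OF _ open_ball z(1)]) (simp add: exp_log_quot)
  then have "deriv (quot_z \<phi>) z = quot_z \<phi> z * deriv (log_quot \<phi>) z"
    using exp_log_quot[OF z(1)] by (simp add: DERIV_imp_deriv)
  then show ?thesis
    using logderiv_quot_z[OF z] quot_z_nonzero[OF z(1)] by simp
qed

lemma has_field_derivative_phi_alpha:
  assumes z: "z \<in> ball 0 1"
  shows "(phi_alpha \<phi> a has_field_derivative exp (of_real a * log_quot \<phi> z)) (at z)"
  unfolding phi_alpha_def[abs_def] log_quot_def[symmetric]
  by (rule linepath_integral_has_field_derivative[OF _ convex_ball open_ball _ z])
    (auto intro!: holomorphic_intros log_quot_holomorphic)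

lemma abs_Im_log_quot_less:
  assumes conv: "convex_mapping \<phi>" and z: "z \<in> ball 0 1"
  shows "\<bar>Im (log_quot \<phi> z)\<bar> < pi / 2"
proof (rule abs_Im_less_pi_half_if_Re_exp_pos[where a = 0, OF _ connected_ball _ _ _ z])
  show "continuous_on (ball 0 1) (log_quot \<phi>)"
    by (rule holomorphic_on_imp_continuous_on[OF log_quot_holomorphic])
  show "0 < Re (exp (log_quot \<phi> w))" if "w \<in> ball 0 1" for w
    using Re_quot_z_gt_half[OF conv that] exp_log_quot[OF that] by simp
qed (use log_quot_branch_log_quot in \<open>auto simp: log_quot_branch_def\<close>)

theorem convex_mapping_phi_alpha:
  assumes conv: "convex_mapping \<phi>" and a: "0 \<le> a" "a \<le> 2"
  shows "convex_mapping (phi_alpha \<phi> a)"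
proof (rule convex_mapping_if_Re_pos)
  show "phi_alpha \<phi> a holomorphic_on ball 0 1"
    unfolding holomorphic_on_open[OF open_ball] using has_field_derivative_phi_alpha by blast
  show "(\<lambda>z. of_real a * log_quot \<phi> z) holomorphic_on ball 0 1"
    by (intro holomorphic_intros log_quot_holomorphic)
  show "deriv (phi_alpha \<phi> a) z = exp (of_real a * log_quot \<phi> z)" if "z \<in> ball 0 1" for z
    by (rule DERIV_imp_deriv[OF has_field_derivative_phi_alpha[OF that]])
  show "0 < Re (1 + z * deriv (\<lambda>z. of_real a * log_quot \<phi> z) z)" if z: "z \<in> ball 0 1" for z
  proof (cases "z = 0 \<or> a = 0")
    case False
    have "deriv (\<lambda>z. of_real a * log_quot \<phi> z) z = of_real a * deriv (log_quot \<phi>) z"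
      by (auto intro!: DERIV_imp_deriv derivative_eq_intros
          holomorphic_derivI[OF log_quot_holomorphic open_ball z])
    then have "z * deriv (\<lambda>z. of_real a * log_quot \<phi> z) z = of_real a * (z * deriv (log_quot \<phi>) z)"
      by (simp add: mult_ac)
    also have "\<dots> = of_real a * (starlike_ratio \<phi> z - 1)"
      using logderiv_log_quot[OF z] False by simp
    finally have eq: "z * deriv (\<lambda>z. of_real a * log_quot \<phi> z) z = of_real a * (starlike_ratio \<phi> z - 1)" .
    have "Re (1 + z * deriv (\<lambda>z. of_real a * log_quot \<phi> z) z)
        = 1 - a / 2 + a * (Re (starlike_ratio \<phi> z) - 1/2)"
      unfolding eq by (simp add: algebra_simps)
    moreover have "0 < a * (Re (starlike_ratio \<phi> z) - 1/2)"
      using Re_starlike_ratio_gt_half[OF conv z] False a(1) by simp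
    ultimately show ?thesis
      using a(2) by simp
  qed auto
qed

end

section \<open>Stable close-to-convexity\<close>

lemma x0_root: "0 < x0" "x0 \<le> 1" "x0 * pi + 2 * arcsin x0 = pi / 2"
proof -
  define f where "f x = x * pi + 2 * arcsin x" for x
  have mono: "f x < f y" if "0 \<le> x" "x < y" "y \<le> 1" for x y
    using that arcsin_le_arcsin[of x y] by (simp add: f_def mult_strict_right_mono add_less_le_mono)
  have "continuous_on {0..1} f"
    unfolding f_def by (intro continuous_intros) auto
  then obtain x where x: "0 \<le> x" "x \<le> 1" "f x = pi / 2"
    using IVT'[of f 0 "pi / 2" 1] by (auto simp: f_def)
  then have root: "0 < x \<and> x \<le> 1 \<and> x * pi + 2 * arcsin x = pi / 2"
    by (cases "x = 0") (auto simp: f_def)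
  have "x0 = x"
    unfolding x0_def
  proof (rule the_equality)
    show "0 < x \<and> x \<le> 1 \<and> x * pi + 2 * arcsin x = pi / 2"
      by (rule root)
  next
    fix y assume "0 < y \<and> y \<le> 1 \<and> y * pi + 2 * arcsin y = pi / 2"
    then show "y = x"
      using mono[of y x] mono[of x y] x by (cases y x rule: linorder_cases) (auto simp: f_def)
  qed
  then show "0 < x0" "x0 \<le> 1" "x0 * pi + 2 * arcsin x0 = pi / 2"
    using root by auto
qed

lemma x0_arg_bound:
  assumes a: "0 \<le> a" "a < x0" and y: "\<bar>y\<bar> \<le> pi / 2"
  shows "a * \<bar>y\<bar> + 2 * arcsin a < pi / 2"
proof -
  have "arcsin a \<le> arcsin x0"
    using a x0_root by (intro arcsin_le_arcsin) auto
  moreover have "a * \<bar>y\<bar> \<le> a * pi"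
    using a y by (intro mult_left_mono) auto
  moreover have "a * pi < x0 * pi"
    using a by simp
  ultimately show ?thesis
    using x0_root(3) by linarith
qed

lemma arcsin_less_pi_quarter:
  assumes "0 \<le> a" "a < sqrt 2 / 2"
  shows "arcsin a < pi / 4"
proof -
  have "arcsin a < arcsin (sqrt 2 / 2)"
    using assms sqrt2_less_2 by (intro arcsin_less_arcsin) auto
  also have "arcsin (sqrt 2 / 2) = pi / 4"
    using arcsin_sin[of "pi / 4"] by (simp add: sin_45)
  finally show ?thesis .
qed

lemma abs_less_1_if_alpha_range:
  assumes "- x0 < \<alpha>" "\<alpha> < sqrt 2 / 2"
  shows "\<bar>\<alpha>\<bar> < 1"
proof -
  have "sqrt 2 / 2 < (1::real)"
    using sqrt2_less_2 by simp
  then show ?thesis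
    using assms x0_root(2) by linarith
qed

lemma deriv_add_mult_of_dilatation:
  assumes H: "H holomorphic_on ball 0 1" and G: "G holomorphic_on ball 0 1"
    and diff: "\<And>z. z \<in> ball 0 1 \<Longrightarrow> H z - G z = F z" and z: "z \<in> ball 0 1"
    and F: "(F has_field_derivative F') (at z)"
    and dil: "deriv H z \<noteq> 0" "deriv G z / deriv H z = \<nu>" "\<nu> \<noteq> 1"
  shows "deriv (\<lambda>z. H z + c * G z) z = F' * (1 + c * \<nu>) / (1 - \<nu>)"
proof -
  note dH = holomorphic_derivI[OF H open_ball z] and dG = holomorphic_derivI[OF G open_ball z]
  have "((\<lambda>z. H z - G z) has_field_derivative deriv H z - deriv G z) (at z)"
    using dH dG by (rule DERIV_diff)
  then have "(F has_field_derivative deriv H z - deriv G z) (at z)"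
    by (rule has_field_derivative_transform_within_open[OF _ open_ball z]) (use diff in auto)
  then have "deriv H z - deriv G z = F'"
    using F by (rule DERIV_unique)
  moreover have G': "deriv G z = \<nu> * deriv H z"
    using dil(1,2) by (simp add: field_simps)
  moreover have "1 - \<nu> \<noteq> 0"
    using dil(3) by simp
  ultimately have H': "deriv H z = F' / (1 - \<nu>)"
    by (simp add: eq_divide_eq algebra_simps)
  have "deriv (\<lambda>z. H z + c * G z) z = deriv H z + c * deriv G z"
    using dH dG by (auto intro!: DERIV_imp_deriv derivative_eq_intros)
  also have "\<dots> = (1 + c * \<nu>) * deriv H z"
    by (simp add: G' algebra_simps)
  also have "\<dots> = F' * (1 + c * \<nu>) / (1 - \<nu>)"
    by (simp add: H')
  finally show ?thesis .
qed

lemma close_to_convex_if_arg_bound: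
  assumes f: "f holomorphic_on ball 0 1" and \<psi>: "convex_mapping \<psi>" and c: "norm c = 1"
    and f': "\<And>z. z \<in> ball 0 1 \<Longrightarrow> deriv f z = deriv \<psi> z * (exp (X z) * ((1 + c * \<nu> z) / (1 - \<nu> z)))"
    and \<nu>: "\<And>z. z \<in> ball 0 1 \<Longrightarrow> norm (\<nu> z) \<le> \<beta>" and \<beta>: "\<beta> < 1"
    and bound: "\<And>z. z \<in> ball 0 1 \<Longrightarrow> \<bar>Im (X z)\<bar> + 2 * arcsin \<beta> < pi / 2"
  shows "close_to_convex f"
  unfolding close_to_convex_def
proof (intro conjI exI[of _ \<psi>] ballI)
  fix z :: complex assume z: "z \<in> ball 0 1"
  have "arcsin (norm (\<nu> z)) \<le> arcsin \<beta>"
  proof (rule arcsin_le_arcsin)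
    show "-1 \<le> norm (\<nu> z)"
      by (rule order_trans[of _ 0]) simp_all
  qed (use \<nu>[OF z] \<beta> in auto)
  moreover have "norm (c * \<nu> z) = norm (\<nu> z)"
    using c by (simp add: norm_mult)
  ultimately have "0 < Re (exp (X z) * (1 + c * \<nu> z) / (1 + - \<nu> z))"
    using \<nu>[OF z] \<beta> bound[OF z] by (intro Re_exp_mult_ratio_pos) auto
  moreover have "deriv \<psi> z \<noteq> 0"
    using \<psi> z by (intro holomorphic_injective_imp_regular[OF _ open_ball]) (auto simp: convex_mapping_def)
  ultimately show "0 < Re (deriv f z / deriv \<psi> z)"
    by (simp add: f'[OF z])
qed (use f \<psi> in auto)

lemma SHCC_if_dilatation_bound:
  assumes \<phi>: "convex_mapping \<phi>" "\<phi> 0 = 0" "deriv \<phi> 0 = 1" and \<alpha>: "- x0 < \<alpha>" "\<alpha> < sqrt 2 / 2"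
    and H: "H holomorphic_on ball 0 1" and G: "G holomorphic_on ball 0 1"
    and HG_diff: "\<And>z. z \<in> ball 0 1 \<Longrightarrow> H z - G z = phi_alpha \<phi> \<alpha> z"
    and HG_dil: "\<And>z. z \<in> ball 0 1 \<Longrightarrow> deriv H z \<noteq> 0 \<and> deriv G z / deriv H z = \<nu> z"
    and \<nu>: "\<And>z. z \<in> ball 0 1 \<Longrightarrow> norm (\<nu> z) \<le> \<bar>\<alpha>\<bar>"
  shows "SHCC H G"
  unfolding SHCC_def
proof (intro allI impI)
  fix c :: complex assume c: "norm c = 1"
  have \<phi>_univalent: "\<phi> holomorphic_on ball 0 1" "inj_on \<phi> (ball 0 1)"
    using \<phi>(1) by (auto simp: convex_mapping_def)
  note phi_alpha' = has_field_derivative_phi_alpha[OF \<phi>_univalent \<phi>(2,3)]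
  have \<alpha>1: "\<bar>\<alpha>\<bar> < 1"
    by (rule abs_less_1_if_alpha_range[OF \<alpha>])
  have f: "(\<lambda>z. H z + c * G z) holomorphic_on ball 0 1"
    by (intro holomorphic_intros H G)
  have f': "deriv (\<lambda>z. H z + c * G z) z = exp (of_real \<alpha> * log_quot \<phi> z) * ((1 + c * \<nu> z) / (1 - \<nu> z))"
    if z: "z \<in> ball 0 1" for z
  proof -
    have "\<nu> z \<noteq> 1"
      using \<nu>[OF z] \<alpha>1 by auto
    then show ?thesis
      using deriv_add_mult_of_dilatation[OF H G HG_diff z phi_alpha'[OF z]] HG_dil[OF z] by simp
  qed
  show "close_to_convex (\<lambda>z. H z + c * G z)"
  proof (cases "\<alpha> \<le> 0")
    case True
    have "\<bar>Im (of_real \<alpha> * log_quot \<phi> z)\<bar> + 2 * arcsin \<bar>\<alpha>\<bar> < pi / 2" if z: "z \<in> ball 0 1" for z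
      using x0_arg_bound[of "\<bar>\<alpha>\<bar>" "Im (log_quot \<phi> z)"] abs_Im_log_quot_less[OF \<phi>_univalent \<phi>(2,3,1) z]
        True \<alpha>(1) by (simp add: abs_mult)
    then show ?thesis
      using f' by (intro close_to_convex_if_arg_bound[OF f _ c _ \<nu> \<alpha>1, where \<psi> = "\<lambda>z. z"])
        (auto simp: convex_mapping_def)
  next
    case False
    have "arcsin \<bar>\<alpha>\<bar> < pi / 4"
      using False \<alpha>(2) by (intro arcsin_less_pi_quarter) auto
    moreover have "convex_mapping (phi_alpha \<phi> \<alpha>)"
      using False \<alpha>1 by (intro convex_mapping_phi_alpha[OF \<phi>_univalent \<phi>(2,3,1)]) auto
    ultimately show ?thesis
      using f' DERIV_imp_deriv[OF phi_alpha']
      by (intro close_to_convex_if_arg_bound[OF f _ c _ \<nu> \<alpha>1, where X = "\<lambda>z. 0"]) auto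
  qed
qed

theorem mainTheorem3:
  fixes h g H G :: "complex \<Rightarrow> complex" and \<alpha> :: real
  assumes h_an: "h holomorphic_on unit_disc" and g_an: "g holomorphic_on unit_disc"
    and sense: "\<forall>z\<in>unit_disc. norm (deriv g z) < norm (deriv h z)"
    and norm0: "h 0 = 0" "g 0 = 0" "deriv h 0 = 1" "deriv g 0 = 0"
    and conv: "convex_mapping (\<lambda>z. h z - g z)"
    and alpha: "- x0 < \<alpha>" "\<alpha> < sqrt 2 / 2"
    and H_an: "H holomorphic_on unit_disc" and G_an: "G holomorphic_on unit_disc"
    and HG0: "H 0 = 0" "G 0 = 0"
    and HG_diff: "\<forall>z\<in>unit_disc. H z - G z = phi_alpha (\<lambda>z. h z - g z) \<alpha> z"
    and HG_dil: "\<forall>z\<in>unit_disc. deriv H z \<noteq> 0 \<and>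
                   deriv G z / deriv H z = of_real \<alpha> * (deriv g z / deriv h z)"
  shows "SHCC H G"
proof -
  define \<phi> where "\<phi> = (\<lambda>z. h z - g z)"
  define \<nu> where "\<nu> z = of_real \<alpha> * (deriv g z / deriv h z)" for z
  have "deriv \<phi> 0 = 1"
    using norm0 holomorphic_derivI[OF h_an open_ball, of 0] holomorphic_derivI[OF g_an open_ball, of 0]
    by (auto simp: \<phi>_def intro!: DERIV_imp_deriv derivative_eq_intros)
  moreover have "norm (\<nu> z) \<le> \<bar>\<alpha>\<bar>" if "z \<in> ball 0 1" for z
  proof -
    have "norm (deriv g z / deriv h z) \<le> 1"
      using sense that by (simp add: norm_divide divide_le_eq_1 less_imp_le)
    then show ?thesis
      unfolding \<nu>_def norm_mult norm_of_real by (rule mult_left_le) simp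
  qed
  ultimately show ?thesis
    using conv norm0 HG_diff HG_dil
    by (intro SHCC_if_dilatation_bound[OF _ _ _ alpha H_an G_an, of \<phi> \<nu>]) (auto simp: \<phi>_def \<nu>_def)
qed

end
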